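(* Let $b$ be a negative integer and let $f(x)=\sum_{k=2}^{\infty}x^k\sum_{j\ge1,\ j\ne -b}\frac{1}{(j+b)^k}$ (the singular term $j=-b$ omitted), convergent for $|x|<1$. Then for $x$ in this disc with $x\neq b$, $2x\notin\mathbb{Z}$, $$f(x)=1+\frac{x^2}{2b(x-b)}-\frac{\pi x}{2}\cot(\pi x)-\pi x\int_0^1\left(\frac{\sin(2\pi(x-b)u)}{\sin(2\pi x)}-u\cos(2\pi b u)\right)\cot(\pi u)\,du,$$ and the right-hand side gives an analytic continuation of $f$ to such $x\in\mathbb{C}$. *)

theory Defs
  imports "HOL-Complex_Analysis.Complex_Analysis"
begin

definition coeffB :: "int \<Rightarrow> nat \<Rightarrow> complex" where
  "coeffB b k = (\<Sum>\<^sub>\<infinity>j\<in>{j::nat. j \<ge> 1 \<and> int j \<noteq> - b}. 1 / (of_int (int j + b)) ^ k)"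

definition fB :: "int \<Rightarrow> complex \<Rightarrow> complex" where
  "fB b x = (\<Sum>k. x ^ (k + 2) * coeffB b (k + 2))"

definition rhsB :: "int \<Rightarrow> complex \<Rightarrow> complex" where
  "rhsB b x = 1 + x^2 / (2 * of_int b * (x - of_int b))
     - of_real pi * x / 2 * cot (of_real pi * x)
     - of_real pi * x * integral {0..1::real}
         (\<lambda>u. (sin (2 * of_real pi * (x - of_int b) * of_real u) / sin (2 * of_real pi * x)
                - of_real u * cos (2 * of_real pi * of_int b * of_real u))
               * of_real (cot (pi * u)))"

end

theory Submission
  imports Defs
begin

text \<open>
  Write \<open>N = -b\<close>. Expanding every summand \<open>1/(j - N)^k\<close> of \<open>f\<close> geometrically and
  exchanging the absolutely convergent double series gives
  \<open>f(x) = \<Sum>\<^sub>j\<^sub>\<noteq>\<^sub>N (x/(j-N))\<^sup>2 / (1 - x/(j-N))\<close>: the terms with \<open>j < N\<close> form a finite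
  sum and those with \<open>j > N\<close> are the digamma series at \<open>1 - x\<close>.

  On the other side, with \<open>\<phi>\<^sub>N(x,u) = sin(2\<pi>(x+N)u) - u sin(2\<pi>x) cos(2\<pi>Nu)\<close>, the integral
  \<open>I\<^sub>N(x) = \<integral>\<^sub>0\<^sup>1 \<phi>\<^sub>N(x,u) cot(\<pi>u) du\<close> satisfies an explicit recurrence in \<open>N\<close>, because
  \<open>(sin(A+2a) - sin A) cot a = cos(A+2a) + cos A\<close>, and tends to \<open>(1 + cos 2\<pi>x)/2\<close> as
  \<open>N \<rightarrow> \<infinity>\<close> by the Riemann--Lebesgue lemma. Hence \<open>I\<^sub>N(x)\<close> is a tail of the digamma series
  at \<open>1 + x\<close>, and the reflection formula \<open>\<psi>(1-x) - \<psi>(x) = \<pi> cot \<pi>x\<close> turns the right-hand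
  side into the same closed form as \<open>f\<close>, which is holomorphic off the integers.
\<close>

section \<open>The digamma function\<close>

lemma Digamma_reflection_complex:
  fixes z :: complex
  assumes z: "z \<notin> \<int>"
  shows "Digamma (1 - z) - Digamma z = of_real pi * cot (of_real pi * z)"
proof -
  let ?g = "\<lambda>z::complex. Gamma z * Gamma (1 - z) * sin (of_real pi * z)"
  let ?g' = "\<lambda>z. Gamma z * Gamma (1 - z) * ((Digamma z - Digamma (1 - z)) * sin (of_real pi * z) +
                     of_real pi * cos (of_real pi * z))"
  have z1: "1 - z \<notin> \<int>" using z Ints_diff[of 1 "1-z"] by auto
  have nz: "z \<notin> \<int>\<^sub>\<le>\<^sub>0" "1 - z \<notin> \<int>\<^sub>\<le>\<^sub>0" using z z1 nonpos_Ints_subset_Ints by auto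
  have "(?g has_field_derivative ?g' z) (at z)"
    using nz by (auto intro!: derivative_eq_intros simp: algebra_simps)
  moreover have "(?g has_field_derivative 0) (at z)"
  proof -
    have "eventually (\<lambda>t. t \<in> UNIV - \<int>) (nhds z)"
      using z by (intro eventually_nhds_in_open) (auto simp: open_Diff)
    then have ev: "eventually (\<lambda>t. ?g t = of_real pi) (nhds z)"
    proof eventually_elim
      case (elim t)
      then have "sin (of_real pi * t) \<noteq> 0" by (subst sin_eq_0) auto
      then show ?case using Gamma_reflection_complex[of t] by (simp add: field_simps)
    qed
    show ?thesis by (subst DERIV_cong_ev[OF refl ev refl]) (rule DERIV_const)
  qed
  ultimately have "?g' z = 0" by (rule DERIV_unique)
  moreover have sz: "sin (of_real pi * z) \<noteq> 0" using z by (subst sin_eq_0) auto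
  moreover have "Gamma z \<noteq> 0" "Gamma (1 - z) \<noteq> 0" using nz by (auto simp: Gamma_eq_zero_iff)
  ultimately have "(Digamma z - Digamma (1 - z)) * sin (of_real pi * z) + of_real pi * cos (of_real pi * z) = 0"
    by simp
  then show ?thesis using sz by (simp add: cot_def field_simps)
qed

definition digamma_term :: "complex \<Rightarrow> nat \<Rightarrow> complex" where
  "digamma_term z k = inverse (of_nat (Suc k)) - inverse (z + of_nat k)"

lemma suminf_digamma_term: "suminf (digamma_term z) = Digamma z + euler_mascheroni"
  by (simp add: Digamma_def digamma_term_def[abs_def])

lemma summable_digamma_term: "z \<noteq> 0 \<Longrightarrow> summable (digamma_term z)"
  unfolding digamma_term_def by (rule summable_Digamma)

lemma add_of_nat_neq_0_if_not_Ints: "x \<notin> \<int> \<Longrightarrow> x + of_nat n \<noteq> (0::complex)"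
  by (metis Ints_minus Ints_of_nat add_eq_0_iff2)

lemma pi_cot_eq_suminf_digamma_term:
  fixes x :: complex
  assumes x: "x \<notin> \<int>"
  shows "of_real pi * cot (of_real pi * x)
           = suminf (digamma_term (1 - x)) - suminf (digamma_term (1 + x)) + 1 / x"
proof -
  have "x \<noteq> 0" using x by auto
  then have "Digamma (1 + x) = Digamma x + 1 / x" using Digamma_plus1[of x] by (simp add: add.commute)
  then show ?thesis using Digamma_reflection_complex[OF x] by (simp add: suminf_digamma_term)
qed

text \<open>Both \<open>fB (-N)\<close> and \<open>rhsB (-N)\<close> turn out to equal \<open>digamma_form N\<close>.\<close>

definition digamma_form :: "nat \<Rightarrow> complex \<Rightarrow> complex" where
  "digamma_form N x = x * (\<Sum>k<N - 1. digamma_term (1 + x) k) - x * suminf (digamma_term (1 - x))"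

lemma digamma_form_holomorphic: "digamma_form N holomorphic_on {x. x \<notin> \<int>}"
proof -
  have "1 - x \<notin> \<int>\<^sub>\<le>\<^sub>0" if "x \<notin> \<int>" for x :: complex
  proof
    assume "1 - x \<in> \<int>\<^sub>\<le>\<^sub>0"
    then have "1 - (1 - x) \<in> \<int>" using nonpos_Ints_subset_Ints by (intro Ints_diff) auto
    with that show False by simp
  qed
  then have "Digamma holomorphic_on ((\<lambda>x. 1 - x) ` {x. x \<notin> \<int>})"
    by (intro holomorphic_on_Polygamma) auto
  then have Dig: "(\<lambda>x. Digamma (1 - x)) holomorphic_on {x. x \<notin> \<int>}"
    by (rule holomorphic_on_compose[of "\<lambda>x. 1 - x", unfolded o_def, rotated]) (intro holomorphic_intros)
  have "digamma_form N = (\<lambda>x. x * (\<Sum>k<N - 1. inverse (of_nat (Suc k)) - inverse (1 + x + of_nat k))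
                              - x * (Digamma (1 - x) + euler_mascheroni))"
    by (simp add: fun_eq_iff digamma_form_def digamma_term_def suminf_digamma_term)
  moreover have "1 + x + of_nat k \<noteq> 0" if "x \<notin> \<int>" for x :: complex and k
    using add_of_nat_neq_0_if_not_Ints[OF that, of "Suc k"] by (simp add: add_ac)
  ultimately show ?thesis by (auto intro!: holomorphic_intros Dig)
qed

section \<open>Integrals against the kernel $\cot(\pi u)$ on $[0,1]$\<close>

definition cot_pi :: "real \<Rightarrow> complex" where
  "cot_pi u = of_real (cot (pi * u))"

lemma cot_pi_eq: "cot_pi u = cot (of_real pi * of_real u)"
  by (simp add: cot_pi_def cot_of_real)

lemma sin_pi_neq_0:
  assumes "0 < u" "u < 1"
  shows "sin (of_real pi * of_real u :: complex) \<noteq> 0"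
proof -
  have "sin (pi * u) \<noteq> 0"
  proof
    assume "sin (pi * u) = 0"
    then obtain n :: int where "pi * u = of_int n * pi" by (auto simp: sin_zero_iff_int2)
    then have "u = of_int n" by simp
    with assms show False by auto
  qed
  then show ?thesis by (metis of_real_eq_0_iff of_real_mult sin_of_real)
qed

lemma integral_cong_open_unit:
  assumes "\<And>u. 0 < u \<Longrightarrow> u < 1 \<Longrightarrow> f u = g u"
  shows "integral {0..1::real} f = integral {0..1} g"
  by (rule integral_spike[of "{0,1}"]) (use assms in \<open>auto simp: negligible_finite\<close>)

lemma integrable_cong_open_unit:
  assumes "\<And>u. 0 < u \<Longrightarrow> u < 1 \<Longrightarrow> f u = g u" "g integrable_on {0..1::real}"
  shows "f integrable_on {0..1}"
  by (rule integrable_spike_finite[of "{0,1}", OF _ _ assms(2)]) (use assms(1) in auto)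

lemma tendsto_mult_cot_pi_at_Ints:
  fixes n :: real
  assumes "n \<in> \<int>"
  shows "((\<lambda>u. (u - n) * cot (pi * u)) \<longlongrightarrow> 1 / pi) (at n)"
proof -
  obtain m where n: "n = of_int m" using assms by (auto elim: Ints_cases)
  have c: "cos (pi * n) \<noteq> 0" by (simp add: n)
  have "((\<lambda>u. sin (pi * u)) has_field_derivative cos (pi * n) * pi) (at n)"
    by (auto intro!: derivative_eq_intros)
  then have "((\<lambda>u. sin (pi * u) / (u - n)) \<longlongrightarrow> cos (pi * n) * pi) (at n)"
    by (simp add: has_field_derivative_iff n)
  then have "((\<lambda>u. cos (pi * u) / (sin (pi * u) / (u - n))) \<longlongrightarrow> cos (pi * n) / (cos (pi * n) * pi)) (at n)"
    using c by (intro tendsto_intros) auto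
  then have "((\<lambda>u. cos (pi * u) / (sin (pi * u) / (u - n))) \<longlongrightarrow> 1 / pi) (at n)"
    using c by simp
  then show ?thesis
    by (rule Lim_transform_eventually) (auto simp: eventually_at_filter cot_def mult.commute)
qed

lemma tendsto_mult_cot_pi:
  fixes G :: "complex \<Rightarrow> complex" and n :: real
  assumes "n \<in> \<int>" "(G has_field_derivative D) (at (of_real n))" "G (of_real n) = 0"
  shows "((\<lambda>u. G (of_real u) * cot_pi u) \<longlongrightarrow> D / of_real pi) (at n)"
proof -
  have "((\<lambda>z. G z / (z - of_real n)) \<longlongrightarrow> D) (at (of_real n))"
    using assms(2,3) by (simp add: has_field_derivative_iff)
  moreover have "((\<lambda>u::real. of_real u :: complex) \<longlongrightarrow> of_real n) (at n)"
    by (auto intro!: tendsto_eq_intros)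
  moreover have "\<exists>d>0. \<forall>x::real. x \<noteq> n \<and> norm (x - n) < d \<longrightarrow> (of_real x::complex) \<noteq> of_real n"
    by (intro exI[of _ 1]) auto
  ultimately have "((\<lambda>u::real. G (of_real u) / (of_real u - of_real n)) \<longlongrightarrow> D) (at n)"
    using LIM_compose2 by blast
  then have "((\<lambda>u. G (of_real u) / (of_real u - of_real n) * of_real ((u - n) * cot (pi * u)))
               \<longlongrightarrow> D / of_real pi) (at n)"
    by (rule tendsto_eq_rhs[OF tendsto_mult[OF _ tendsto_of_real[OF tendsto_mult_cot_pi_at_Ints[OF assms(1)]]]])
       (simp add: divide_inverse)
  then show ?thesis
  proof (rule Lim_transform_eventually)
    have "G (of_real u) / (of_real u - of_real n) * of_real ((u - n) * cot (pi * u))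
            = G (of_real u) * cot_pi u" if "u \<noteq> n" for u
    proof -
      have "(of_real u - of_real n :: complex) \<noteq> 0" using that by simp
      then show ?thesis by (simp add: cot_pi_def)
    qed
    then show "eventually (\<lambda>u. G (of_real u) / (of_real u - of_real n) * of_real ((u - n) * cot (pi * u))
                 = G (of_real u) * cot_pi u) (at n)"
      by (auto simp: eventually_at_filter intro!: always_eventually)
  qed
qed

lemma continuous_extension_mult_cot_pi:
  fixes G :: "complex \<Rightarrow> complex"
  assumes G: "G holomorphic_on UNIV" and G0: "G 0 = 0" and G1: "G 1 = 0"
  obtains h where "continuous_on {0..1} h"
    "\<And>u. 0 < u \<Longrightarrow> u < 1 \<Longrightarrow> h u = G (of_real u) * cot_pi u"
proof -
  have diff: "G field_differentiable at z" for z
    using G holomorphic_on_imp_differentiable_at by blast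
  obtain D0 where D0: "(G has_field_derivative D0) (at 0)" using diff field_differentiable_def by blast
  obtain D1 where D1: "(G has_field_derivative D1) (at 1)" using diff field_differentiable_def by blast
  define h where "h u = (if u = 0 then D0 / of_real pi else if u = 1 then D1 / of_real pi
                          else G (of_real u) * cot_pi u)" for u
  have "continuous_on {0..1} h"
  proof (rule continuous_on_IccI)
    have "((\<lambda>u. G (of_real u) * cot_pi u) \<longlongrightarrow> D0 / of_real pi) (at 0)"
      using tendsto_mult_cot_pi[of 0 G D0] D0 G0 by simp
    then have "((\<lambda>u. G (of_real u) * cot_pi u) \<longlongrightarrow> D0 / of_real pi) (at_right 0)"
      by (rule filterlim_mono[OF _ order_refl at_within_le_at])
    then have "(h \<longlongrightarrow> D0 / of_real pi) (at_right 0)"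
      by (rule Lim_transform_eventually) (auto simp: eventually_at h_def intro!: exI[of _ 1])
    then show "(h \<longlongrightarrow> h 0) (at_right 0)" by (simp add: h_def)
    have "((\<lambda>u. G (of_real u) * cot_pi u) \<longlongrightarrow> D1 / of_real pi) (at 1)"
      using tendsto_mult_cot_pi[of 1 G D1] D1 G1 by simp
    then have "((\<lambda>u. G (of_real u) * cot_pi u) \<longlongrightarrow> D1 / of_real pi) (at_left 1)"
      by (rule filterlim_mono[OF _ order_refl at_within_le_at])
    then have "(h \<longlongrightarrow> D1 / of_real pi) (at_left 1)"
      by (rule Lim_transform_eventually) (auto simp: eventually_at h_def dist_real_def intro!: exI[of _ 1])
    then show "(h \<longlongrightarrow> h 1) (at_left 1)" by (simp add: h_def)
  next
    fix x :: real assume x: "0 < x" "x < 1"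
    have "isCont cot_pi x"
      using sin_pi_neq_0[OF x] unfolding cot_pi_eq cot_def by (intro continuous_intros) auto
    moreover have "isCont (\<lambda>u. G (of_real u)) x"
      by (rule isCont_o2[OF _ field_differentiable_imp_continuous_at[OF diff]]) (intro continuous_intros)
    ultimately have "isCont (\<lambda>u. G (of_real u) * cot_pi u) x" by (rule isCont_mult[rotated])
    then have "((\<lambda>u. G (of_real u) * cot_pi u) \<longlongrightarrow> h x) (at x)"
      using x by (simp add: isCont_def h_def)
    then show "(h \<longlongrightarrow> h x) (at x)"
      by (rule Lim_transform_eventually)
         (use x in \<open>auto simp: eventually_at h_def dist_real_def intro!: exI[of _ "min x (1 - x)"]\<close>)
  qed simp
  then show ?thesis by (rule that) (auto simp: h_def)
qed

lemma integrable_mult_cot_pi: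
  fixes G :: "complex \<Rightarrow> complex"
  assumes "G holomorphic_on UNIV" "G 0 = 0" "G 1 = 0"
  shows "(\<lambda>u. G (of_real u) * cot_pi u) integrable_on {0..1}"
proof -
  obtain h where "continuous_on {0..1} h" "\<And>u. 0 < u \<Longrightarrow> u < 1 \<Longrightarrow> h u = G (of_real u) * cot_pi u"
    using continuous_extension_mult_cot_pi[OF assms] by blast
  then show ?thesis by (intro integrable_cong_open_unit[of _ h, OF _ integrable_continuous_real]) auto
qed

section \<open>Oscillatory integrals\<close>

lemma integral_sum_uniform_partition:
  fixes f :: "real \<Rightarrow> complex"
  assumes f: "f integrable_on {0..1}" and N: "N > 0"
  shows "integral {0..1} f = (\<Sum>k<N. integral {real k / N..real (Suc k) / N} f)"
proof -
  have "m \<le> N \<Longrightarrow> integral {0..real m / N} f = (\<Sum>k<m. integral {real k / N..real (Suc k) / N} f)" for m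
  proof (induction m)
    case (Suc m)
    have sub: "{0..real (Suc m) / N} \<subseteq> {0..1}" using Suc.prems N by (auto simp: field_simps)
    have "integral {0..real m / N} f + integral {real m / N..real (Suc m) / N} f
            = integral {0..real (Suc m) / N} f"
      by (rule Henstock_Kurzweil_Integration.integral_combine[OF _ _ integrable_on_subinterval[OF f sub]])
         (use N in \<open>auto simp: divide_right_mono\<close>)
    then show ?case using Suc by simp
  qed simp
  from this[of N] N show ?thesis by simp
qed

lemma norm_integral_mean_zero_weight_le:
  fixes h :: "real \<Rightarrow> complex" and w :: "real \<Rightarrow> real"
  assumes ab: "a \<le> b" and h: "continuous_on {a..b} h" and w: "continuous_on {a..b} w"
    and w1: "\<And>u. u \<in> {a..b} \<Longrightarrow> \<bar>w u\<bar> \<le> 1" and w0: "integral {a..b} w = 0"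
    and he: "\<And>u. u \<in> {a..b} \<Longrightarrow> norm (h u - h a) \<le> e"
  shows "norm (integral {a..b} (\<lambda>u. of_real (w u) * h u)) \<le> e * (b - a)"
proof -
  have i1: "(\<lambda>u. of_real (w u) * h u) integrable_on {a..b}"
    by (intro integrable_continuous_real continuous_intros w h)
  have i2: "(\<lambda>u. of_real (w u) * h a) integrable_on {a..b}"
    by (intro integrable_continuous_real continuous_intros w)
  have "integral {a..b} (\<lambda>u. of_real (w u) * h a) = integral {a..b} (\<lambda>u. w u *\<^sub>R h a)"
    by (simp add: scaleR_conv_of_real)
  also have "\<dots> = integral {a..b} w *\<^sub>R h a"
    using integrable_continuous_real[OF w]
    by (intro integral_unique has_integral_scaleR_left integrable_integral)
  finally have "integral {a..b} (\<lambda>u. of_real (w u) * h a) = 0" using w0 by simp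
  then have "integral {a..b} (\<lambda>u. of_real (w u) * h u) = integral {a..b} (\<lambda>u. of_real (w u) * (h u - h a))"
    using integral_diff[OF i1 i2] by (simp add: right_diff_distrib)
  also have "norm \<dots> \<le> integral {a..b} (\<lambda>u. e)"
  proof (rule integral_norm_bound_integral)
    show "(\<lambda>u. of_real (w u) * (h u - h a)) integrable_on {a..b}"
      using integrable_diff[OF i1 i2] by (simp add: algebra_simps)
    fix u assume u: "u \<in> {a..b}"
    show "norm (of_real (w u) * (h u - h a)) \<le> e"
      unfolding norm_mult using mult_mono[of "norm (of_real (w u) :: complex)" 1 "norm (h u - h a)" e] w1[OF u] he[OF u]
      by auto
  qed auto
  also have "\<dots> = e * (b - a)" using ab by simp
  finally show ?thesis .
qed

text \<open>
  A Riemann--Lebesgue lemma for continuous functions: it suffices that the bounded weights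
  \<open>w N\<close> have mean zero on each cell of the uniform partition of $[0,1]$ into \<open>N\<close> pieces,
  because on a short cell \<open>h\<close> is nearly constant.
\<close>

lemma tendsto_integral_mean_zero_weights:
  fixes h :: "real \<Rightarrow> complex" and w :: "nat \<Rightarrow> real \<Rightarrow> real"
  assumes h: "continuous_on {0..1} h"
    and wc: "\<And>N. continuous_on {0..1} (w N)"
    and wb: "\<And>N u. \<bar>w N u\<bar> \<le> 1"
    and w0: "\<And>N k. N > 0 \<Longrightarrow> k < N \<Longrightarrow> integral {real k / N..real (Suc k) / N} (w N) = 0"
  shows "(\<lambda>N. integral {0..1} (\<lambda>u. of_real (w N u) * h u)) \<longlonglongrightarrow> 0"
proof (rule LIMSEQ_I)
  fix r :: real assume r: "r > 0"
  have "uniformly_continuous_on {0..1} h"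
    using h by (intro compact_uniformly_continuous) auto
  then obtain d where d: "d > 0"
    "\<And>x x'. x \<in> {0..1} \<Longrightarrow> x' \<in> {0..1} \<Longrightarrow> dist x' x < d \<Longrightarrow> dist (h x') (h x) < r / 2"
    using r unfolding uniformly_continuous_on_def by (metis half_gt_zero)
  obtain N0 :: nat where N0: "1 / d < N0" using reals_Archimedean2 by blast
  show "\<exists>no. \<forall>N\<ge>no. norm (integral {0..1} (\<lambda>u. of_real (w N u) * h u) - 0) < r"
  proof (intro exI allI impI)
    fix N assume "N \<ge> N0 + 1"
    then have Npos: "N > 0" and "1 / d < N" using N0 by linarith+
    then have Nd: "1 / real N < d" using d(1) by (simp add: field_simps)
    have cell: "norm (integral {real k / N..real (Suc k) / N} (\<lambda>u. of_real (w N u) * h u)) \<le> r / 2 * (1 / N)"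
      if k: "k < N" for k
    proof -
      let ?a = "real k / N" and ?b = "real (Suc k) / N"
      have sub: "{?a..?b} \<subseteq> {0..1}" using k Npos by (auto simp: field_simps)
      have ab: "?a \<le> ?b" and len: "?b - ?a = 1 / N"
        using Npos by (simp_all add: divide_right_mono add_divide_distrib)
      have near: "norm (h u - h ?a) \<le> r / 2" if u: "u \<in> {?a..?b}" for u
      proof -
        have "dist u ?a < d" using u len Nd by (auto simp: dist_real_def)
        moreover have "u \<in> {0..1}" "?a \<in> {0..1}" using u sub ab by (auto simp: subset_iff)
        ultimately show ?thesis using d(2)[of ?a u] by (simp add: dist_norm)
      qed
      have "norm (integral {?a..?b} (\<lambda>u. of_real (w N u) * h u)) \<le> r / 2 * (?b - ?a)"
        by (intro norm_integral_mean_zero_weight_le ab continuous_on_subset[OF h sub]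
            continuous_on_subset[OF wc sub] wb w0[OF Npos k] near)
      then show ?thesis unfolding len .
    qed
    have intg: "(\<lambda>u. of_real (w N u) * h u) integrable_on {0..1}"
      by (intro integrable_continuous_real continuous_intros wc h)
    have "norm (integral {0..1} (\<lambda>u. of_real (w N u) * h u)) \<le> (\<Sum>k<N. r / 2 * (1 / N))"
      unfolding integral_sum_uniform_partition[OF intg Npos]
      by (rule order.trans[OF norm_sum sum_mono]) (use cell in auto)
    also have "\<dots> = r / 2" using Npos by simp
    finally show "norm (integral {0..1} (\<lambda>u. of_real (w N u) * h u) - 0) < r" using r by simp
  qed
qed

lemma integral_periodic_uniform_cell:
  fixes F f :: "real \<Rightarrow> real"
  assumes N: "N > 0" and F: "\<And>t. (F has_real_derivative f t) (at t)"
    and periodic: "\<And>t. F (t + 2 * pi) = F t"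
  shows "integral {real k / N..real (Suc k) / N} (\<lambda>u. f (2 * pi * real N * u)) = 0"
proof -
  let ?G = "\<lambda>u. F (2 * pi * real N * u) / (2 * pi * real N)"
  have "((\<lambda>u. f (2 * pi * real N * u)) has_integral (?G (real (Suc k) / N) - ?G (real k / N)))
          {real k / N..real (Suc k) / N}"
  proof (rule fundamental_theorem_of_calculus)
    show "real k / real N \<le> real (Suc k) / real N" using N by (simp add: divide_right_mono)
    fix u
    have "((\<lambda>u. 2 * pi * real N * u) has_real_derivative 2 * pi * real N) (at u)"
      by (auto intro!: derivative_eq_intros)
    from DERIV_cdivide[OF DERIV_chain2[OF F this], of "2 * pi * real N"]
    have "(?G has_real_derivative f (2 * pi * real N * u)) (at u)" using N by simp
    then show "(?G has_vector_derivative f (2 * pi * real N * u)) (at u within {real k / N..real (Suc k) / N})"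
      by (simp add: has_real_derivative_iff_has_vector_derivative[symmetric] has_field_derivative_at_within)
  qed
  moreover have "2 * pi * real N * (real (Suc k) / N) = 2 * pi * real N * (real k / N) + 2 * pi"
    using N by (simp add: field_simps)
  ultimately show ?thesis using periodic by (simp add: integral_unique)
qed

lemma Riemann_Lebesgue_cos:
  fixes h :: "real \<Rightarrow> complex"
  assumes "continuous_on {0..1} h"
  shows "(\<lambda>N. integral {0..1} (\<lambda>u. of_real (cos (2 * pi * real N * u)) * h u)) \<longlonglongrightarrow> 0"
proof (rule tendsto_integral_mean_zero_weights[OF assms])
  show "integral {real k / N..real (Suc k) / N} (\<lambda>u. cos (2 * pi * real N * u)) = 0"
    if "N > 0" "k < N" for N k
    by (rule integral_periodic_uniform_cell[OF that(1), where F = sin]) (auto intro!: derivative_eq_intros)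
qed (auto intro!: continuous_intros)

lemma Riemann_Lebesgue_sin:
  fixes h :: "real \<Rightarrow> complex"
  assumes "continuous_on {0..1} h"
  shows "(\<lambda>N. integral {0..1} (\<lambda>u. of_real (sin (2 * pi * real N * u)) * h u)) \<longlonglongrightarrow> 0"
proof (rule tendsto_integral_mean_zero_weights[OF assms])
  show "integral {real k / N..real (Suc k) / N} (\<lambda>u. sin (2 * pi * real N * u)) = 0"
    if "N > 0" "k < N" for N k
    by (rule integral_periodic_uniform_cell[OF that(1), where F = "\<lambda>t. - cos t"])
       (auto intro!: derivative_eq_intros)
qed (auto intro!: continuous_intros)

lemma has_integral_unit_of_field_derivative:
  fixes G g :: "complex \<Rightarrow> complex"
  assumes "\<And>z. (G has_field_derivative g z) (at z)"
  shows "((\<lambda>u. g (of_real u)) has_integral (G 1 - G 0)) {0..1}"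
  using fundamental_theorem_of_calculus[of 0 1 "\<lambda>u. G (of_real u)" "\<lambda>u. g (of_real u)"]
  by (auto intro!: has_vector_derivative_real_field assms)

lemma sin_two_pi_of_nat: "sin (2 * of_real pi * of_nat N :: complex) = 0"
  and cos_two_pi_of_nat: "cos (2 * of_real pi * of_nat N :: complex) = 1"
proof -
  have e: "(2 * of_real pi * of_nat N :: complex) = of_real (2 * real N * pi)" by simp
  show "sin (2 * of_real pi * of_nat N :: complex) = 0" unfolding e sin_of_real by simp
  show "cos (2 * of_real pi * of_nat N :: complex) = 1" unfolding e cos_of_real by simp
qed

lemma sin_add_two_pi_of_nat: "sin (y + 2 * of_real pi * of_nat N :: complex) = sin y"
  by (simp add: sin_add sin_two_pi_of_nat cos_two_pi_of_nat)

lemma has_integral_cos_unit: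
  fixes a :: complex
  assumes "a \<noteq> 0"
  shows "((\<lambda>u. cos (2 * of_real pi * a * of_real u)) has_integral
           sin (2 * of_real pi * a) / (2 * of_real pi * a)) {0..1}"
proof -
  have "((\<lambda>z. sin (2 * of_real pi * a * z) / (2 * of_real pi * a)) has_field_derivative
          cos (2 * of_real pi * a * z)) (at z)" for z
    using assms by (auto intro!: derivative_eq_intros)
  from has_integral_unit_of_field_derivative[OF this] show ?thesis by simp
qed

lemma has_integral_cos_unit_of_nat:
  assumes "N \<ge> 1"
  shows "((\<lambda>u. cos (2 * of_real pi * of_nat N * of_real u) :: complex) has_integral 0) {0..1}"
  using has_integral_cos_unit[of "of_nat N"] assms by (simp add: sin_two_pi_of_nat)

lemma has_integral_u_cos_unit_of_nat:
  assumes "N \<ge> 1"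
  shows "((\<lambda>u. of_real u * cos (2 * of_real pi * of_nat N * of_real u) :: complex) has_integral 0) {0..1}"
proof -
  define c where "c = 2 * of_real pi * (of_nat N :: complex)"
  have c: "c \<noteq> 0" "sin c = 0" "cos c = 1"
    using assms by (simp_all add: c_def sin_two_pi_of_nat cos_two_pi_of_nat)
  have "((\<lambda>z. z * sin (c * z) / c + cos (c * z) / c^2) has_field_derivative z * cos (c * z)) (at z)" for z
    using c by (auto intro!: derivative_eq_intros simp: field_simps power2_eq_square)
  from has_integral_unit_of_field_derivative[OF this] c show ?thesis by (simp add: c_def)
qed

lemma has_integral_u_sin_unit_of_nat:
  assumes "N \<ge> 1"
  shows "((\<lambda>u. of_real u * sin (2 * of_real pi * of_nat N * of_real u) :: complex) has_integral
           - 1 / (2 * of_real pi * of_nat N)) {0..1}"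
proof -
  define c where "c = 2 * of_real pi * (of_nat N :: complex)"
  have c: "c \<noteq> 0" "sin c = 0" "cos c = 1"
    using assms by (simp_all add: c_def sin_two_pi_of_nat cos_two_pi_of_nat)
  have "((\<lambda>z. - z * cos (c * z) / c + sin (c * z) / c^2) has_field_derivative z * sin (c * z)) (at z)" for z
    using c by (auto intro!: derivative_eq_intros simp: field_simps power2_eq_square)
  from has_integral_unit_of_field_derivative[OF this] c show ?thesis by (simp add: c_def)
qed

lemma sin_diff_mult_cot:
  fixes A a :: "'a :: {real_normed_field, banach}"
  assumes "sin a \<noteq> 0"
  shows "(sin (A + 2 * a) - sin A) * cot a = cos (A + 2 * a) + cos A"
proof -
  have "sin a ^ 2 + cos a ^ 2 = 1" by (rule sin_cos_squared_add)
  then have "(sin (A + 2 * a) - sin A) * cos a = (cos (A + 2 * a) + cos A) * sin a"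
    unfolding sin_add cos_add sin_double cos_double by algebra
  then show ?thesis using assms by (simp add: cot_def field_simps)
qed

lemma cos_diff_mult_cot:
  fixes A a :: "'a :: {real_normed_field, banach}"
  assumes "sin a \<noteq> 0"
  shows "(cos (A + 2 * a) - cos A) * cot a = - (sin (A + 2 * a) + sin A)"
proof -
  have "sin a ^ 2 + cos a ^ 2 = 1" by (rule sin_cos_squared_add)
  then have "(cos (A + 2 * a) - cos A) * cos a = - (sin (A + 2 * a) + sin A) * sin a"
    unfolding sin_add cos_add sin_double cos_double by algebra
  then show ?thesis using assms by (simp add: cot_def field_simps)
qed

section \<open>The integral in $N$ and its closed form\<close>

text \<open>For \<open>b = - N\<close> the integrand of \<open>rhsB b x\<close> is \<open>phi N x u * cot_pi u / sin (2 \<pi> x)\<close>.\<close>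

definition phi :: "nat \<Rightarrow> complex \<Rightarrow> complex \<Rightarrow> complex" where
  "phi N x z = sin (2 * of_real pi * (x + of_nat N) * z)
                 - z * sin (2 * of_real pi * x) * cos (2 * of_real pi * of_nat N * z)"

definition cot_integral :: "nat \<Rightarrow> complex \<Rightarrow> complex" where
  "cot_integral N x = integral {0..1} (\<lambda>u. phi N x (of_real u) * cot_pi u)"

lemma sin_two_pi_add_of_nat: "sin (2 * of_real pi * (x + of_nat N)) = sin (2 * of_real pi * x :: complex)"
  by (simp add: distrib_left sin_add_two_pi_of_nat)

lemma integrable_phi_mult_cot_pi: "(\<lambda>u. phi N x (of_real u) * cot_pi u) integrable_on {0..1}"
proof (rule integrable_mult_cot_pi)
  show "phi N x holomorphic_on UNIV" unfolding phi_def by (intro holomorphic_intros)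
  show "phi N x 1 = 0" by (simp add: phi_def sin_two_pi_add_of_nat cos_two_pi_of_nat)
qed (simp add: phi_def)

lemma phi_Suc_diff_mult_cot_pi:
  assumes u: "0 < u" "u < 1"
  shows "phi (Suc N) x (of_real u) * cot_pi u - phi N x (of_real u) * cot_pi u =
    cos (2 * of_real pi * (x + of_nat (Suc N)) * of_real u) + cos (2 * of_real pi * (x + of_nat N) * of_real u)
    + sin (2 * of_real pi * x) * (of_real u * sin (2 * of_real pi * of_nat (Suc N) * of_real u))
    + sin (2 * of_real pi * x) * (of_real u * sin (2 * of_real pi * of_nat N * of_real u))"
proof -
  define a where "a = of_real pi * (of_real u :: complex)"
  define A where "A = 2 * of_real pi * (x + of_nat N) * (of_real u :: complex)"
  define B where "B = 2 * of_real pi * of_nat N * (of_real u :: complex)"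
  have sa: "sin a \<noteq> 0" using sin_pi_neq_0[OF u] by (simp add: a_def)
  have e: "2 * of_real pi * (x + of_nat (Suc N)) * of_real u = A + 2 * a"
    "2 * of_real pi * of_nat (Suc N) * of_real u = B + 2 * a"
    "2 * of_real pi * (x + of_nat N) * of_real u = A"
    "2 * of_real pi * of_nat N * of_real u = B"
    by (simp_all add: A_def B_def a_def algebra_simps)
  have "phi (Suc N) x (of_real u) * cot_pi u - phi N x (of_real u) * cot_pi u =
      (sin (A + 2 * a) - sin A) * cot a - of_real u * sin (2 * of_real pi * x) * ((cos (B + 2 * a) - cos B) * cot a)"
    unfolding phi_def cot_pi_eq a_def[symmetric] e by (simp add: algebra_simps)
  also have "\<dots> = cos (A + 2 * a) + cos A + of_real u * sin (2 * of_real pi * x) * (sin (B + 2 * a) + sin B)"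
    unfolding sin_diff_mult_cot[OF sa] cos_diff_mult_cot[OF sa] by (simp add: algebra_simps)
  finally show ?thesis unfolding e by (simp add: algebra_simps)
qed

lemma cot_integral_Suc_diff:
  assumes N: "N \<ge> 1" and x: "x + of_nat N \<noteq> 0" "x + of_nat (Suc N) \<noteq> 0"
  shows "cot_integral (Suc N) x - cot_integral N x = sin (2 * of_real pi * x) / (2 * of_real pi) *
     (1 / (x + of_nat (Suc N)) + 1 / (x + of_nat N) - 1 / of_nat (Suc N) - 1 / of_nat N)"
proof -
  let ?s = "sin (2 * of_real pi * x)"
  have "cot_integral (Suc N) x - cot_integral N x
          = integral {0..1} (\<lambda>u. phi (Suc N) x (of_real u) * cot_pi u - phi N x (of_real u) * cot_pi u)"
    unfolding cot_integral_def
    by (rule integral_diff[symmetric, OF integrable_phi_mult_cot_pi integrable_phi_mult_cot_pi])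
  also have "\<dots> = integral {0..1} (\<lambda>u.
        cos (2 * of_real pi * (x + of_nat (Suc N)) * of_real u) + cos (2 * of_real pi * (x + of_nat N) * of_real u)
      + ?s * (of_real u * sin (2 * of_real pi * of_nat (Suc N) * of_real u))
      + ?s * (of_real u * sin (2 * of_real pi * of_nat N * of_real u)))"
    by (rule integral_cong_open_unit) (rule phi_Suc_diff_mult_cot_pi)
  also have "\<dots> = ?s / (2 * of_real pi * (x + of_nat (Suc N))) + ?s / (2 * of_real pi * (x + of_nat N))
      + ?s * (- 1 / (2 * of_real pi * of_nat (Suc N))) + ?s * (- 1 / (2 * of_real pi * of_nat N))"
    using has_integral_cos_unit[OF x(2)] has_integral_cos_unit[OF x(1)]
      has_integral_u_sin_unit_of_nat[of "Suc N"] has_integral_u_sin_unit_of_nat[OF N]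
    by (intro integral_unique has_integral_add has_integral_mult_right)
       (simp_all add: sin_two_pi_add_of_nat sin_two_pi_add_of_nat[of x "Suc N", simplified])
  also have "\<dots> = ?s / (2 * of_real pi) *
      (1 / (x + of_nat (Suc N)) + 1 / (x + of_nat N) - 1 / of_nat (Suc N) - 1 / of_nat N)"
  proof -
    have "s / (2 * p * y') + s / (2 * p * y) + s * (- 1 / (2 * p * n')) + s * (- 1 / (2 * p * n))
            = s / (2 * p) * (1 / y' + 1 / y - 1 / n' - 1 / n)"
      if "p \<noteq> 0" "y \<noteq> 0" "y' \<noteq> 0" "n \<noteq> 0" "n' \<noteq> 0" for s p y y' n n' :: complex
      using that by (simp add: field_simps)
    moreover have "of_nat (Suc N) \<noteq> (0::complex)" "of_nat N \<noteq> (0::complex)"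
      using N by (simp_all only: of_nat_eq_0_iff)
    ultimately show ?thesis using x by simp
  qed
  finally show ?thesis .
qed

lemma sin_Suc_diff_mult_cot_pi:
  assumes u: "0 < u" "u < 1"
  shows "(sin (2 * of_real pi * of_nat (Suc N) * of_real u) - sin (2 * of_real pi * of_nat N * of_real u)) * cot_pi u
     = cos (2 * of_real pi * of_nat (Suc N) * of_real u) + cos (2 * of_real pi * of_nat N * of_real u)"
proof -
  define a where "a = of_real pi * (of_real u :: complex)"
  have "2 * of_real pi * of_nat (Suc N) * of_real u = 2 * of_real pi * of_nat N * of_real u + 2 * a"
    by (simp add: a_def algebra_simps)
  then show ?thesis
    using sin_diff_mult_cot[of a "2 * of_real pi * of_nat N * of_real u"] sin_pi_neq_0[OF u]
    by (simp add: a_def cot_pi_eq)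
qed

lemma integrable_sin_mult_cot_pi:
  assumes "p holomorphic_on UNIV"
  shows "(\<lambda>u. p (of_real u) * sin (2 * of_real pi * of_nat N * of_real u) * cot_pi u) integrable_on {0..1}"
proof -
  have "(\<lambda>z. p z * sin (2 * of_real pi * of_nat N * z)) holomorphic_on UNIV"
    using assms by (intro holomorphic_on_mult holomorphic_intros)
  then show ?thesis by (rule integrable_mult_cot_pi) (simp_all add: sin_two_pi_of_nat)
qed

lemma integral_sin_mult_cot_pi_Suc_diff:
  assumes p: "p holomorphic_on UNIV"
  shows "integral {0..1} (\<lambda>u. p (of_real u) * sin (2 * of_real pi * of_nat (Suc N) * of_real u) * cot_pi u)
       - integral {0..1} (\<lambda>u. p (of_real u) * sin (2 * of_real pi * of_nat N * of_real u) * cot_pi u)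
       = integral {0..1} (\<lambda>u. p (of_real u) * (cos (2 * of_real pi * of_nat (Suc N) * of_real u)
                                                + cos (2 * of_real pi * of_nat N * of_real u)))"
proof -
  have "integral {0..1} (\<lambda>u. p (of_real u) * sin (2 * of_real pi * of_nat (Suc N) * of_real u) * cot_pi u)
       - integral {0..1} (\<lambda>u. p (of_real u) * sin (2 * of_real pi * of_nat N * of_real u) * cot_pi u)
       = integral {0..1} (\<lambda>u. p (of_real u) * ((sin (2 * of_real pi * of_nat (Suc N) * of_real u)
                                  - sin (2 * of_real pi * of_nat N * of_real u)) * cot_pi u))"
    by (subst integral_diff[symmetric, OF integrable_sin_mult_cot_pi[OF p] integrable_sin_mult_cot_pi[OF p]])
       (simp add: algebra_simps)
  also have "\<dots> = integral {0..1} (\<lambda>u. p (of_real u) * (cos (2 * of_real pi * of_nat (Suc N) * of_real u)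
                                                + cos (2 * of_real pi * of_nat N * of_real u)))"
    by (rule integral_cong_open_unit) (simp only: sin_Suc_diff_mult_cot_pi)
  finally show ?thesis .
qed

lemma integral_sin_mult_cot_pi:
  assumes "N \<ge> 1"
  shows "integral {0..1} (\<lambda>u. sin (2 * of_real pi * of_nat N * of_real u) * cot_pi u) = 1"
  using assms
proof (induction N rule: dec_induct)
  case base
  have "((\<lambda>u. cos (2 * of_real pi * of_nat 1 * of_real u) + 1 :: complex) has_integral 0 + 1) {0..1}"
    using has_integral_const_real[of "1::complex" 0 1]
    by (intro has_integral_add has_integral_cos_unit_of_nat) simp_all
  then show ?case
    using integral_sin_mult_cot_pi_Suc_diff[of "\<lambda>_. 1" 0] by (simp add: integral_unique)
next
  case (step N)
  have "((\<lambda>u. cos (2 * of_real pi * of_nat (Suc N) * of_real u) + cos (2 * of_real pi * of_nat N * of_real u)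
            :: complex) has_integral 0 + 0) {0..1}"
    using step by (intro has_integral_add has_integral_cos_unit_of_nat) simp_all
  then show ?case
    using integral_sin_mult_cot_pi_Suc_diff[of "\<lambda>_. 1" N] step by (simp add: integral_unique)
qed

lemma integral_u_sin_mult_cot_pi:
  assumes "N \<ge> 1"
  shows "integral {0..1} (\<lambda>u. of_real u * sin (2 * of_real pi * of_nat N * of_real u) * cot_pi u) = 1 / 2"
  using assms
proof (induction N rule: dec_induct)
  case base
  have "((\<lambda>z. z^2 / 2) has_field_derivative z) (at z)" for z :: complex
    by (auto intro!: derivative_eq_intros)
  from has_integral_unit_of_field_derivative[OF this]
  have "((\<lambda>u. of_real u :: complex) has_integral 1 / 2) {0..1}" by simp
  then have "((\<lambda>u. of_real u * cos (2 * of_real pi * of_nat 1 * of_real u) + of_real u :: complex)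
               has_integral 0 + 1 / 2) {0..1}"
    by (intro has_integral_add has_integral_u_cos_unit_of_nat) simp_all
  then show ?case
    using integral_sin_mult_cot_pi_Suc_diff[of "\<lambda>z. z" 0] by (simp add: integral_unique algebra_simps)
next
  case (step N)
  have "((\<lambda>u. of_real u * cos (2 * of_real pi * of_nat (Suc N) * of_real u)
             + of_real u * cos (2 * of_real pi * of_nat N * of_real u) :: complex) has_integral 0 + 0) {0..1}"
    using step by (intro has_integral_add has_integral_u_cos_unit_of_nat) simp_all
  then show ?case
    using integral_sin_mult_cot_pi_Suc_diff[of "\<lambda>z. z" N] step by (simp add: integral_unique algebra_simps)
qed

lemma phi_mult_cot_pi_split:
  "phi N x (of_real u) * cot_pi u =
      of_real (cos (2 * pi * real N * u))
        * ((sin (2 * of_real pi * x * of_real u) - of_real u * sin (2 * of_real pi * x)) * cot_pi u)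
    + of_real (sin (2 * pi * real N * u))
        * ((cos (2 * of_real pi * x * of_real u) - 1 - (cos (2 * of_real pi * x) - 1) * of_real u) * cot_pi u)
    + sin (2 * of_real pi * of_nat N * of_real u) * cot_pi u
    + (cos (2 * of_real pi * x) - 1) * (of_real u * sin (2 * of_real pi * of_nat N * of_real u) * cot_pi u)"
proof -
  have c: "of_real (cos (2 * pi * real N * u)) = cos (2 * of_real pi * of_nat N * (of_real u :: complex))"
    and s: "of_real (sin (2 * pi * real N * u)) = sin (2 * of_real pi * of_nat N * (of_real u :: complex))"
    by (simp_all flip: cos_of_real sin_of_real)
  have e: "2 * of_real pi * (x + of_nat N) * of_real u
             = 2 * of_real pi * x * of_real u + 2 * of_real pi * of_nat N * (of_real u :: complex)"
    by (simp add: algebra_simps)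
  show ?thesis unfolding c s phi_def e sin_add by algebra
qed

text \<open>The first two terms of the splitting vanish in the limit by the Riemann--Lebesgue lemma,
  the last two are constant for \<open>N \<ge> 1\<close>.\<close>

lemma cot_integral_tendsto: "(\<lambda>N. cot_integral N x) \<longlonglongrightarrow> (1 + cos (2 * of_real pi * x)) / 2"
proof -
  define s where "s = sin (2 * of_real pi * x)"
  define c where "c = cos (2 * of_real pi * x)"
  define K where "K z = sin (2 * of_real pi * x * z) - z * s" for z
  define M where "M z = cos (2 * of_real pi * x * z) - 1 - (c - 1) * z" for z
  have "K holomorphic_on UNIV" "M holomorphic_on UNIV"
    unfolding K_def M_def by (intro holomorphic_intros holomorphic_on_mult holomorphic_on_id)+
  then obtain hK hM where
    hK: "continuous_on {0..1} hK" "\<And>u. 0 < u \<Longrightarrow> u < 1 \<Longrightarrow> hK u = K (of_real u) * cot_pi u" and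
    hM: "continuous_on {0..1} hM" "\<And>u. 0 < u \<Longrightarrow> u < 1 \<Longrightarrow> hM u = M (of_real u) * cot_pi u"
    using continuous_extension_mult_cot_pi[of K] continuous_extension_mult_cot_pi[of M]
    by (auto simp: K_def M_def s_def c_def) metis
  let ?A = "\<lambda>N. integral {0..1} (\<lambda>u. of_real (cos (2 * pi * real N * u)) * hK u)"
  let ?B = "\<lambda>N. integral {0..1} (\<lambda>u. of_real (sin (2 * pi * real N * u)) * hM u)"
  have eq: "cot_integral N x = ?A N + ?B N + 1 + (c - 1) * (1 / 2)" if N: "N \<ge> 1" for N
  proof -
    have "cot_integral N x = integral {0..1} (\<lambda>u.
          of_real (cos (2 * pi * real N * u)) * hK u + of_real (sin (2 * pi * real N * u)) * hM u
        + sin (2 * of_real pi * of_nat N * of_real u) * cot_pi u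
        + (c - 1) * (of_real u * sin (2 * of_real pi * of_nat N * of_real u) * cot_pi u))"
      unfolding cot_integral_def
      by (rule integral_cong_open_unit) (simp add: phi_mult_cot_pi_split hK hM K_def M_def c_def s_def)
    also have "\<dots> = ?A N + ?B N + 1 + (c - 1) * (1 / 2)"
    proof (intro integral_unique has_integral_add has_integral_mult_right)
      show "((\<lambda>u. of_real (cos (2 * pi * real N * u)) * hK u) has_integral ?A N) {0..1}"
        by (intro integrable_integral integrable_continuous_real continuous_intros hK(1))
      show "((\<lambda>u. of_real (sin (2 * pi * real N * u)) * hM u) has_integral ?B N) {0..1}"
        by (intro integrable_integral integrable_continuous_real continuous_intros hM(1))
      show "((\<lambda>u. sin (2 * of_real pi * of_nat N * of_real u) * cot_pi u) has_integral 1) {0..1}"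
        using integrable_integral[OF integrable_sin_mult_cot_pi[of "\<lambda>_. 1" N]] integral_sin_mult_cot_pi[OF N]
        by simp
      show "((\<lambda>u. of_real u * sin (2 * of_real pi * of_nat N * of_real u) * cot_pi u) has_integral 1 / 2) {0..1}"
        using integrable_integral[OF integrable_sin_mult_cot_pi[of "\<lambda>z. z" N]] integral_u_sin_mult_cot_pi[OF N]
        by simp
    qed
    finally show ?thesis .
  qed
  have "(\<lambda>N. ?A N + ?B N + 1 + (c - 1) * (1 / 2)) \<longlonglongrightarrow> 0 + 0 + 1 + (c - 1) * (1 / 2)"
    by (intro tendsto_intros Riemann_Lebesgue_cos Riemann_Lebesgue_sin hK hM)
  then have "(\<lambda>N. cot_integral N x) \<longlonglongrightarrow> 0 + 0 + 1 + (c - 1) * (1 / 2)"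
    by (rule Lim_transform_eventually) (use eq in \<open>auto simp: eventually_at_top_linorder intro!: exI[of _ 1]\<close>)
  then show ?thesis by (simp add: c_def field_simps)
qed

text \<open>Since the differences in \<open>N\<close> are known and the limit is known, the integral is a tail
  of the digamma series at \<open>1 + x\<close>.\<close>

lemma cot_integral_Suc_eq:
  assumes x: "x \<notin> \<int>"
  shows "cot_integral (Suc n) x = (1 + cos (2 * of_real pi * x)) / 2
     + sin (2 * of_real pi * x) / (2 * of_real pi)
       * (2 * (suminf (digamma_term (1 + x)) - (\<Sum>k<n. digamma_term (1 + x) k)) - digamma_term (1 + x) n)"
proof -
  define s where "s = sin (2 * of_real pi * x)"
  define c where "c = cos (2 * of_real pi * x)"
  define S where "S = suminf (digamma_term (1 + x))"
  define V where "V n = (1 + c) / 2 + s / (2 * of_real pi) * (2 * (S - (\<Sum>k<n. digamma_term (1 + x) k))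
                          - digamma_term (1 + x) n)" for n
  define D where "D n = cot_integral (Suc n) x - V n" for n
  have z: "1 + x \<noteq> 0" using add_of_nat_neq_0_if_not_Ints[OF x, of 1] by (simp add: add.commute)
  have dterm: "digamma_term (1 + x) n = 1 / of_nat (Suc n) - 1 / (x + of_nat (Suc n))" for n
    by (simp add: digamma_term_def divide_inverse add_ac)
  have "D (Suc n) = D n" for n
  proof -
    have "cot_integral (Suc (Suc n)) x - cot_integral (Suc n) x = s / (2 * of_real pi) *
      (1 / (x + of_nat (Suc (Suc n))) + 1 / (x + of_nat (Suc n)) - 1 / of_nat (Suc (Suc n)) - 1 / of_nat (Suc n))"
      unfolding s_def
      by (rule cot_integral_Suc_diff) (simp_all add: add_of_nat_neq_0_if_not_Ints[OF x] del: of_nat_Suc)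
    also have "\<dots> = s / (2 * of_real pi) * (- digamma_term (1 + x) n - digamma_term (1 + x) (Suc n))"
      by (simp add: dterm algebra_simps)
    also have "\<dots> = V (Suc n) - V n"
      by (simp add: V_def algebra_simps)
    finally show ?thesis by (simp add: D_def algebra_simps)
  qed
  then have "D n = D 0" for n by (induction n) simp_all
  then have const: "D = (\<lambda>_. D 0)" by (rule ext)
  have "(\<lambda>n. cot_integral (Suc n) x) \<longlonglongrightarrow> (1 + c) / 2"
    using cot_integral_tendsto[of x] unfolding c_def by (rule LIMSEQ_Suc)
  moreover have "V \<longlonglongrightarrow> (1 + c) / 2 + s / (2 * of_real pi) * (2 * (S - S) - 0)"
    unfolding V_def S_def
    by (intro tendsto_intros summable_LIMSEQ summable_LIMSEQ_zero summable_digamma_term z)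
  ultimately have "D \<longlonglongrightarrow> 0"
    unfolding D_def by (auto intro: tendsto_eq_intros)
  then have "D 0 = 0" using const LIMSEQ_const_iff by metis
  then show ?thesis using const by (simp add: fun_eq_iff D_def V_def s_def c_def S_def)
qed

section \<open>The power series\<close>

definition nonsingular_indices :: "nat \<Rightarrow> nat set" where
  "nonsingular_indices N = {j. 1 \<le> j \<and> j \<noteq> N}"

definition recip_diff :: "nat \<Rightarrow> nat \<Rightarrow> complex" where
  "recip_diff N j = 1 / of_int (int j - int N)"

lemma summable_on_inverse_square_diff:
  "(\<lambda>j. 1 / (real_of_int (int j - int N))^2) summable_on nonsingular_indices N"
proof -
  define f where "f j = 1 / (real_of_int (int j - int N))^2" for j
  have "summable (\<lambda>n. inverse (real (Suc n) ^ 2))"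
    using inverse_power_summable[of 2, where 'a=real] by (subst summable_Suc_iff) simp
  moreover have "f (n + Suc N) = inverse (real (Suc n) ^ 2)" for n
    by (simp add: f_def divide_inverse of_nat_add)
  ultimately have "summable (\<lambda>n. f (n + Suc N))" by simp
  then have "summable f" by (subst (asm) summable_iff_shift)
  moreover have "f j \<ge> 0" for j by (simp add: f_def)
  ultimately have "f summable_on UNIV" by (intro norm_summable_imp_summable_on) simp
  then show ?thesis unfolding f_def[symmetric] by (rule summable_on_subset_banach) simp
qed

lemma norm_recip_diff_le_1: "j \<in> nonsingular_indices N \<Longrightarrow> norm (recip_diff N j) \<le> 1"
proof -
  assume "j \<in> nonsingular_indices N"
  then have "int j - int N \<noteq> 0" by (auto simp: nonsingular_indices_def)
  then have "\<bar>real_of_int (int j - int N)\<bar> \<ge> 1" by linarith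
  then show ?thesis unfolding recip_diff_def norm_divide norm_of_int by (simp del: of_int_diff)
qed

lemma norm_recip_diff_squared: "norm (recip_diff N j) ^ 2 = 1 / (real_of_int (int j - int N))^2"
  unfolding recip_diff_def norm_divide norm_of_int by (simp add: power_divide del: of_int_diff)

lemma summable_on_recip_diff_power:
  assumes k: "k \<ge> 2"
  shows "(\<lambda>j. recip_diff N j ^ k) summable_on nonsingular_indices N"
proof -
  have "(\<lambda>j. norm (recip_diff N j ^ k)) summable_on nonsingular_indices N"
  proof (rule summable_on_comparison_test[OF summable_on_inverse_square_diff])
    fix j assume j: "j \<in> nonsingular_indices N"
    obtain d where d: "k = 2 + d" using k le_Suc_ex by blast
    have "norm (recip_diff N j ^ k) = norm (recip_diff N j) ^ 2 * norm (recip_diff N j) ^ d"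
      unfolding d by (simp add: power_add norm_mult norm_power power2_eq_square)
    also have "\<dots> \<le> norm (recip_diff N j) ^ 2 * 1"
      using norm_recip_diff_le_1[OF j] by (intro mult_left_mono power_le_one) auto
    finally show "norm (recip_diff N j ^ k) \<le> 1 / (real_of_int (int j - int N))^2"
      by (simp add: norm_recip_diff_squared)
  qed simp
  then show ?thesis using summable_on_iff_abs_summable_on_complex by blast
qed

lemma has_sum_power_from_2:
  fixes w :: "'a :: {real_normed_field, banach}"
  assumes w: "norm w < 1"
  shows "((\<lambda>k. w ^ (k + 2)) has_sum w^2 / (1 - w)) UNIV"
proof (rule norm_summable_imp_has_sum)
  have "summable (\<lambda>k. norm w ^ 2 * norm w ^ k)"
    by (intro summable_mult summable_geometric) (use w in simp)
  then show "summable (\<lambda>k. norm (w ^ (k + 2)))" using w by (simp add: norm_power power_add mult.commute norm_mult)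
  have "(\<lambda>k. w^2 * w ^ k) sums (w^2 * (1 / (1 - w)))"
    by (intro sums_mult geometric_sums w)
  moreover have "(\<lambda>k. w^2 * w ^ k) = (\<lambda>k. w ^ (k + 2))" by (simp only: power_add mult.commute)
  ultimately show "(\<lambda>k. w ^ (k + 2)) sums (w^2 / (1 - w))" by simp
qed

lemma norm_mult_recip_diff_less_1:
  "norm x < 1 \<Longrightarrow> j \<in> nonsingular_indices N \<Longrightarrow> norm (x * recip_diff N j) < 1"
  using mult_left_mono[OF norm_recip_diff_le_1, of j N "norm x"] by (simp add: norm_mult)

text \<open>Absolute convergence of the double series: the inner geometric series is dominated by
  \<open>1 / ((1 - \<bar>x\<bar>) (j - N)\<^sup>2)\<close>.\<close>

lemma abs_summable_on_geometric_recip_diff: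
  assumes x: "norm x < 1"
  shows "(\<lambda>(j, k). (x * recip_diff N j) ^ (k + 2)) summable_on (nonsingular_indices N \<times> UNIV)"
proof -
  let ?I = "nonsingular_indices N"
  let ?w = "\<lambda>j. x * recip_diff N j"
  have inner: "((\<lambda>k. norm (?w j ^ (k + 2))) has_sum (norm (?w j))^2 / (1 - norm (?w j))) UNIV"
    if "j \<in> ?I" for j
    unfolding norm_power using has_sum_power_from_2[of "norm (?w j)"] norm_mult_recip_diff_less_1[OF x that]
    by simp
  have bound: "(norm (?w j))^2 / (1 - norm (?w j)) \<le> 1 / (1 - norm x) * (1 / (real_of_int (int j - int N))^2)"
    if j: "j \<in> ?I" for j
  proof -
    have "norm (?w j) \<le> norm (recip_diff N j)"
      unfolding norm_mult using x by (intro mult_left_le_one_le) auto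
    then have "(norm (?w j))^2 \<le> norm (recip_diff N j) ^ 2" by (intro power_mono) auto
    moreover have "1 - norm x \<le> 1 - norm (?w j)"
      using norm_recip_diff_le_1[OF j] unfolding norm_mult by (simp add: mult_left_le)
    ultimately have "(norm (?w j))^2 / (1 - norm (?w j)) \<le> norm (recip_diff N j) ^ 2 / (1 - norm x)"
      using x norm_mult_recip_diff_less_1[OF x j] by (intro frac_le) auto
    then show ?thesis by (simp add: norm_recip_diff_squared mult.commute)
  qed
  have "(\<lambda>p. norm ((\<lambda>(j, k). ?w j ^ (k + 2)) p)) summable_on Sigma ?I (\<lambda>_. UNIV)"
  proof (subst Infinite_Sum.abs_summable_on_Sigma_iff, intro conjI ballI)
    fix j assume "j \<in> ?I"
    show "(\<lambda>k. norm (case (j, k) of (j, k) \<Rightarrow> ?w j ^ (k + 2))) summable_on UNIV"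
      using inner[OF \<open>j \<in> ?I\<close>] by (auto simp: summable_on_def)
  next
    show "(\<lambda>j. norm (\<Sum>\<^sub>\<infinity>k. norm (case (j, k) of (j, k) \<Rightarrow> ?w j ^ (k + 2)))) summable_on ?I"
    proof (rule summable_on_comparison_test[OF summable_on_cmult_right[OF summable_on_inverse_square_diff]])
      fix j assume j: "j \<in> ?I"
      have "(\<Sum>\<^sub>\<infinity>k. norm (?w j ^ (k + 2))) = (norm (?w j))^2 / (1 - norm (?w j))"
        using inner[OF j] by (rule infsumI)
      then show "norm (\<Sum>\<^sub>\<infinity>k. norm (case (j, k) of (j, k) \<Rightarrow> ?w j ^ (k + 2)))
                   \<le> 1 / (1 - norm x) * (1 / (real_of_int (int j - int N))^2)"
        using bound[OF j] norm_mult_recip_diff_less_1[OF x j] by simp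
    qed simp
  qed
  then show ?thesis using summable_on_iff_abs_summable_on_complex by blast
qed

lemma has_sum_power_series_recip_diff:
  assumes x: "norm x < 1"
  shows "((\<lambda>k. x^(k+2) * (\<Sum>\<^sub>\<infinity>j\<in>nonsingular_indices N. recip_diff N j ^ (k+2))) has_sum
           (\<Sum>\<^sub>\<infinity>j\<in>nonsingular_indices N. (x * recip_diff N j)^2 / (1 - x * recip_diff N j))) UNIV"
    and "(\<lambda>j. (x * recip_diff N j)^2 / (1 - x * recip_diff N j)) summable_on nonsingular_indices N"
proof -
  let ?I = "nonsingular_indices N"
  define P where "P j k = (x * recip_diff N j) ^ (k + 2)" for j k
  have prod: "(\<lambda>(j, k). P j k) summable_on (?I \<times> UNIV)"
    unfolding P_def by (rule abs_summable_on_geometric_recip_diff[OF x])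
  have prod': "(\<lambda>(k, j). P j k) summable_on (UNIV \<times> ?I)"
  proof -
    have "((\<lambda>(k, j). P j k) \<circ> prod.swap) = (\<lambda>(j, k). P j k)" by (auto simp: fun_eq_iff)
    then have "(\<lambda>(k, j). P j k) summable_on (prod.swap ` (?I \<times> UNIV))"
      by (subst summable_on_reindex) (auto simp: prod intro: inj_onI)
    then show ?thesis by (simp add: product_swap)
  qed
  have inner: "(\<Sum>\<^sub>\<infinity>k. P j k) = (x * recip_diff N j)^2 / (1 - x * recip_diff N j)" if "j \<in> ?I" for j
    unfolding P_def by (rule infsumI[OF has_sum_power_from_2[OF norm_mult_recip_diff_less_1[OF x that]]])
  have outer: "(\<lambda>k. \<Sum>\<^sub>\<infinity>j\<in>?I. P j k) summable_on UNIV"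
    using summable_on_Sigma_banach[of "\<lambda>k j. P j k" UNIV "\<lambda>_. ?I"] prod' by simp
  have term_eq: "x^(k+2) * (\<Sum>\<^sub>\<infinity>j\<in>?I. recip_diff N j ^ (k+2)) = (\<Sum>\<^sub>\<infinity>j\<in>?I. P j k)" for k
    unfolding P_def power_mult_distrib by (rule infsum_cmult_right'[symmetric])
  have swap: "(\<Sum>\<^sub>\<infinity>k. \<Sum>\<^sub>\<infinity>j\<in>?I. P j k) = (\<Sum>\<^sub>\<infinity>j\<in>?I. \<Sum>\<^sub>\<infinity>k. P j k)"
    by (rule infsum_swap_banach) (use prod' in simp)
  have sum_eq: "(\<Sum>\<^sub>\<infinity>j\<in>?I. \<Sum>\<^sub>\<infinity>k. P j k)
                   = (\<Sum>\<^sub>\<infinity>j\<in>?I. (x * recip_diff N j)^2 / (1 - x * recip_diff N j))"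
    by (rule infsum_cong) (rule inner)
  show "((\<lambda>k. x^(k+2) * (\<Sum>\<^sub>\<infinity>j\<in>?I. recip_diff N j ^ (k+2))) has_sum
           (\<Sum>\<^sub>\<infinity>j\<in>?I. (x * recip_diff N j)^2 / (1 - x * recip_diff N j))) UNIV"
    unfolding term_eq using has_sum_infsum[OF outer] unfolding swap sum_eq .
  have "(\<lambda>j. \<Sum>\<^sub>\<infinity>k. P j k) summable_on ?I"
    using summable_on_Sigma_banach[of "\<lambda>j k. P j k" ?I "\<lambda>_. UNIV"] prod by simp
  moreover have "(\<lambda>j. \<Sum>\<^sub>\<infinity>k. P j k) summable_on ?I
                   \<longleftrightarrow> (\<lambda>j. (x * recip_diff N j)^2 / (1 - x * recip_diff N j)) summable_on ?I"
    by (rule summable_on_cong) (rule inner)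
  ultimately show "(\<lambda>j. (x * recip_diff N j)^2 / (1 - x * recip_diff N j)) summable_on ?I" by simp
qed

lemma nonsingular_indices_eq: "nonsingular_indices N = {1..<N} \<union> range (\<lambda>n. n + Suc N)"
proof (intro set_eqI iffI)
  fix j assume j: "j \<in> nonsingular_indices N"
  show "j \<in> {1..<N} \<union> range (\<lambda>n. n + Suc N)"
  proof (cases "j < N")
    case False
    then have "j = (j - Suc N) + Suc N" using j by (auto simp: nonsingular_indices_def)
    then show ?thesis by blast
  qed (use j in \<open>auto simp: nonsingular_indices_def\<close>)
qed (auto simp: nonsingular_indices_def)

lemma of_nat_add_1_add_neq_0:
  assumes "norm x < 1"
  shows "(of_nat k + 1 :: complex) + x \<noteq> 0"
proof
  assume "(of_nat k + 1 :: complex) + x = 0"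
  then have "x = - (of_nat k + 1)" by algebra
  also have "(of_nat k + 1 :: complex) = of_nat (Suc k)" by simp
  finally have "norm x = real (Suc k)" by (simp only: norm_minus_cancel norm_of_nat)
  with assms show False by simp
qed

lemma geometric_recip_diff_below:
  assumes x: "norm x < 1" and j: "1 \<le> j" "j < N"
  shows "(x * recip_diff N j)^2 / (1 - x * recip_diff N j) = x * digamma_term (1 + x) (N - 1 - j)"
proof -
  define k where "k = N - 1 - j"
  define z where "z = (of_nat k + 1 :: complex)"
  have "int j - int N = - (int k + 1)" using j by (auto simp: k_def)
  then have "(of_int (int j - int N) :: complex) = - z" by (simp add: z_def)
  then have t: "recip_diff N j = 1 / - z" unfolding recip_diff_def by (simp only:)
  have g: "digamma_term (1 + x) (N - 1 - j) = inverse z - inverse (z + x)"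
    by (simp add: digamma_term_def z_def k_def add_ac)
  have z: "z \<noteq> 0" "z + x \<noteq> 0"
    unfolding z_def using of_nat_add_1_add_neq_0[OF x, of k]
    by (metis add.commute of_nat_Suc of_nat_neq_0)+
  have "1 - x * (1 / - z) = (z + x) / z" "(x * (1 / - z))^2 = x^2 / z^2"
    "inverse z - inverse (z + x) = x / (z * (z + x))"
    using z by (simp_all add: field_simps power_divide power_mult_distrib)
  then show ?thesis unfolding t g using z by (simp add: field_simps power2_eq_square)
qed

lemma geometric_recip_diff_above:
  assumes x: "norm x < 1"
  shows "(x * recip_diff N (n + Suc N))^2 / (1 - x * recip_diff N (n + Suc N)) = - x * digamma_term (1 - x) n"
proof -
  define z where "z = (of_nat n + 1 :: complex)"
  have "int (n + Suc N) - int N = int n + 1" by simp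
  then have "(of_int (int (n + Suc N) - int N) :: complex) = z" by (simp add: z_def)
  then have t: "recip_diff N (n + Suc N) = 1 / z" unfolding recip_diff_def by (simp only:)
  have g: "digamma_term (1 - x) n = inverse z - inverse (z - x)"
    by (simp add: digamma_term_def z_def algebra_simps)
  have z: "z \<noteq> 0" "z - x \<noteq> 0"
    unfolding z_def using of_nat_add_1_add_neq_0[of "- x" n] x
    by (metis add.commute of_nat_Suc of_nat_neq_0, simp)
  have "1 - x * (1 / z) = (z - x) / z" "(x * (1 / z))^2 = x^2 / z^2"
    "inverse z - inverse (z - x) = - x / (z * (z - x))"
    using z by (simp_all add: field_simps power_divide power_mult_distrib)
  then show ?thesis unfolding t g using z by (simp add: field_simps power2_eq_square)
qed

lemma infsum_geometric_recip_diff: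
  assumes N: "N \<ge> 1" and x: "norm x < 1"
  shows "(\<Sum>\<^sub>\<infinity>j\<in>nonsingular_indices N. (x * recip_diff N j)^2 / (1 - x * recip_diff N j)) = digamma_form N x"
proof -
  define Q where "Q j = (x * recip_diff N j)^2 / (1 - x * recip_diff N j)" for j
  define h where "h n = n + Suc N" for n
  have I: "nonsingular_indices N = {1..<N} \<union> range h"
    unfolding h_def by (rule nonsingular_indices_eq)
  have Q_range: "Q summable_on range h"
    using has_sum_power_series_recip_diff(2)[where N = N, OF x] unfolding Q_def[symmetric]
    by (rule summable_on_subset_banach) (auto simp: I)
  have "infsum Q (nonsingular_indices N) = infsum Q {1..<N} + infsum Q (range h)"
    unfolding I by (rule infsum_Un_disjoint) (use Q_range in \<open>auto simp: h_def\<close>)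
  also have "infsum Q {1..<N} = (\<Sum>k<N - 1. x * digamma_term (1 + x) k)"
    unfolding infsum_finite[OF finite_atLeastLessThan]
  proof (rule sum.reindex_bij_witness[of _ "\<lambda>k. N - 1 - k" "\<lambda>j. N - 1 - j"])
    fix j assume "j \<in> {1..<N}"
    then show "x * digamma_term (1 + x) (N - 1 - j) = Q j"
      unfolding Q_def using geometric_recip_diff_below[OF x] by simp
  qed auto
  also have "infsum Q (range h) = - x * suminf (digamma_term (1 - x))"
  proof -
    have inj: "inj h" by (auto simp: h_def inj_def)
    have Qh: "Q \<circ> h = (\<lambda>n. - x * digamma_term (1 - x) n)"
      unfolding Q_def h_def o_def using geometric_recip_diff_above[OF x] by simp
    have "1 - x \<noteq> 0" using x by auto
    then have "(\<lambda>n. - x * digamma_term (1 - x) n) sums (- x * suminf (digamma_term (1 - x)))"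
      by (intro sums_mult summable_sums summable_digamma_term)
    moreover have "(\<lambda>n. - x * digamma_term (1 - x) n) summable_on UNIV"
      using Q_range unfolding summable_on_reindex[OF inj] Qh .
    ultimately show ?thesis
      unfolding infsum_reindex[OF inj] Qh
      using has_sum_imp_sums[OF has_sum_infsum] sums_unique2 by blast
  qed
  finally show ?thesis by (simp add: Q_def digamma_form_def sum_distrib_left)
qed

lemma not_Ints_if_double_not_Ints: "2 * x \<notin> \<int> \<Longrightarrow> x \<notin> \<int>"
  by (metis Ints_add mult_2)

lemma sin_two_pi_neq_0:
  fixes x :: complex
  assumes "2 * x \<notin> \<int>"
  shows "sin (2 * of_real pi * x) \<noteq> 0"
proof
  assume "sin (2 * of_real pi * x) = 0"
  then obtain n :: int where "2 * of_real pi * x = of_real (of_int n * pi)" by (auto simp: sin_eq_0)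
  then have "2 * x = of_int n" by (simp add: field_simps)
  with assms show False by simp
qed

lemma cot_eq_double_angle:
  fixes y :: complex
  assumes "sin (2 * y) \<noteq> 0"
  shows "cot y = (1 + cos (2 * y)) / sin (2 * y)"
proof -
  have "sin y \<noteq> 0" "cos y \<noteq> 0" using assms by (auto simp: sin_double)
  then show ?thesis unfolding cos_double_cos sin_double by (simp add: cot_def field_simps power2_eq_square)
qed

lemma rhsB_eq_cot_integral:
  assumes "sin (2 * of_real pi * x) \<noteq> 0"
  shows "rhsB (- int N) x = 1 - x^2 / (2 * of_nat N * (x + of_nat N))
           - of_real pi * x / 2 * cot (of_real pi * x)
           - of_real pi * x * (cot_integral N x / sin (2 * of_real pi * x))"
proof -
  have "(sin (2 * of_real pi * (x - of_int (- int N)) * of_real u) / sin (2 * of_real pi * x)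
          - of_real u * cos (2 * of_real pi * of_int (- int N) * of_real u)) * of_real (cot (pi * u))
        = phi N x (of_real u) * cot_pi u / sin (2 * of_real pi * x)" for u
  proof -
    have "cos (2 * of_real pi * of_int (- int N) * of_real u)
            = cos (2 * of_real pi * of_nat N * (of_real u :: complex))"
      using cos_minus[of "2 * of_real pi * of_nat N * (of_real u :: complex)"] by simp
    then show ?thesis using assms by (simp add: phi_def cot_pi_def field_simps)
  qed
  then show ?thesis by (simp add: rhsB_def cot_integral_def)
qed

lemma rhsB_eq_digamma_form:
  assumes N: "N \<ge> 1" and x: "2 * x \<notin> \<int>"
  shows "rhsB (- int N) x = digamma_form N x"
proof -
  obtain n where n: "N = Suc n" using N by (cases N) auto
  define s where "s = sin (2 * of_real pi * x)"
  define S1 where "S1 = suminf (digamma_term (1 - x))"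
  define S2 where "S2 = suminf (digamma_term (1 + x))"
  define Sg where "Sg = (\<Sum>k<n. digamma_term (1 + x) k)"
  define T where "T = digamma_term (1 + x) n"
  have s: "s \<noteq> 0" unfolding s_def by (rule sin_two_pi_neq_0[OF x])
  have xZ: "x \<notin> \<int>" by (rule not_Ints_if_double_not_Ints[OF x])
  then have "x \<noteq> 0" "x + of_nat N \<noteq> 0" using add_of_nat_neq_0_if_not_Ints by auto
  have W: "x^2 / (2 * of_nat N * (x + of_nat N)) = x * T / 2"
  proof -
    have gen: "x^2 / (2 * c * m) = x * (1 / c - 1 / m) / 2" if "c \<noteq> 0" "m \<noteq> 0" "m = x + c" for c m :: complex
      using that by (simp add: field_simps power2_eq_square)
    have "T = 1 / of_nat N - 1 / (x + of_nat N)"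
      by (simp add: T_def digamma_term_def n divide_inverse add_ac)
    then show ?thesis by (simp only:) (rule gen, use N \<open>x + of_nat N \<noteq> 0\<close> in simp_all)
  qed
  have C: "cot (of_real pi * x) = (1 + cos (2 * of_real pi * x)) / s"
    using cot_eq_double_angle[of "of_real pi * x"] s by (simp add: s_def mult.assoc)
  have "cot_integral N x = (1 + cos (2 * of_real pi * x)) / 2 + s / (2 * of_real pi) * (2 * (S2 - Sg) - T)"
    using cot_integral_Suc_eq[OF xZ, of n] by (simp add: n s_def S2_def Sg_def T_def)
  then have I: "cot_integral N x / s = cot (of_real pi * x) / 2 + (2 * (S2 - Sg) - T) / (2 * of_real pi)"
    unfolding C using s by (simp add: field_simps)
  have "rhsB (- int N) x = 1 - x * T / 2 - of_real pi * x / 2 * cot (of_real pi * x)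
          - of_real pi * x * (cot (of_real pi * x) / 2 + (2 * (S2 - Sg) - T) / (2 * of_real pi))"
    unfolding rhsB_eq_cot_integral[OF s[unfolded s_def]] W I[unfolded s_def] ..
  also have "\<dots> = 1 - x * (of_real pi * cot (of_real pi * x)) - x * S2 + x * Sg"
    by (simp add: field_simps)
  also have "\<dots> = x * Sg - x * S1"
    unfolding pi_cot_eq_suminf_digamma_term[OF xZ] S1_def[symmetric] S2_def[symmetric]
    using \<open>x \<noteq> 0\<close> by (simp add: field_simps)
  finally show ?thesis by (simp add: digamma_form_def n S1_def Sg_def)
qed

theorem mainTheorem10:
  fixes b :: int
  assumes "b < 0"
  shows "(\<forall>k\<ge>2. (\<lambda>j. 1 / (of_int (int j + b) :: complex) ^ k) summable_on {j::nat. j \<ge> 1 \<and> int j \<noteq> - b})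
       \<and> (\<forall>x::complex. norm x < 1 \<longrightarrow> summable (\<lambda>k. x ^ (k + 2) * coeffB b (k + 2)))
       \<and> (\<forall>x::complex. norm x < 1 \<and> x \<noteq> of_int b \<and> 2 * x \<notin> \<int> \<longrightarrow> fB b x = rhsB b x)
       \<and> rhsB b holomorphic_on {x::complex. x \<noteq> of_int b \<and> 2 * x \<notin> \<int>}"
proof -
  define N where "N = nat (- b)"
  have N: "N \<ge> 1" and b: "b = - int N" using assms by (auto simp: N_def)
  have I: "{j::nat. j \<ge> 1 \<and> int j \<noteq> - b} = nonsingular_indices N"
    by (auto simp: nonsingular_indices_def b)
  have t: "1 / (of_int (int j + b) :: complex) ^ k = recip_diff N j ^ k" for j k
    by (simp add: recip_diff_def b power_one_over)
  have coeff: "coeffB b k = (\<Sum>\<^sub>\<infinity>j\<in>nonsingular_indices N. recip_diff N j ^ k)" for k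
    unfolding coeffB_def I t ..
  have series: "((\<lambda>k. x ^ (k + 2) * coeffB b (k + 2)) has_sum digamma_form N x) UNIV" if "norm x < 1" for x
    using has_sum_power_series_recip_diff(1)[where N = N, OF that]
    unfolding coeff infsum_geometric_recip_diff[OF N that] .
  \<comment> \<open>the hypothesis \<open>x \<noteq> b\<close> of the theorem is implied by \<open>2 * x \<notin> \<int>\<close>\<close>
  have rhs: "rhsB b x = digamma_form N x" if "2 * x \<notin> \<int>" for x
    unfolding b by (rule rhsB_eq_digamma_form[OF N that])
  show ?thesis
  proof (intro conjI allI impI)
    show "(\<lambda>j. 1 / (of_int (int j + b) :: complex) ^ k) summable_on {j. j \<ge> 1 \<and> int j \<noteq> - b}"
      if "k \<ge> 2" for k
      unfolding I t using that by (rule summable_on_recip_diff_power)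
    show "summable (\<lambda>k. x ^ (k + 2) * coeffB b (k + 2))" if "norm x < 1" for x :: complex
      using has_sum_imp_sums[OF series[OF that]] by (rule sums_summable)
    show "fB b x = rhsB b x" if "norm x < 1 \<and> x \<noteq> of_int b \<and> 2 * x \<notin> \<int>" for x :: complex
      using sums_unique[OF has_sum_imp_sums[OF series]] rhs that by (simp add: fB_def)
    have "digamma_form N holomorphic_on {x. x \<noteq> of_int b \<and> 2 * x \<notin> \<int>}"
      by (rule holomorphic_on_subset[OF digamma_form_holomorphic]) (auto dest: not_Ints_if_double_not_Ints)
    then show "rhsB b holomorphic_on {x. x \<noteq> of_int b \<and> 2 * x \<notin> \<int>}"
      by (rule holomorphic_transform) (simp add: rhs)
  qed
qed

end
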